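(* Let $d\ge1$, $\lambda>0$, $\delta>0$, and let $f:\mathbb{R}^d\to\mathbb{R}$ satisfy: (A1) $f$ is continuous and has at least one minimizer; (A2) $\int_{\mathbb{R}^d}\exp(-f(y)/\delta)\,dy<+\infty$. Then: (i) If $f\in C^1$ and there exist $m>0$, $b\ge0$ with $\langle\nabla f(y),y\rangle\ge m\|y\|^2-b$ for all $y\in\mathbb{R}^d$, then for any $R>0$, $f^{\lambda,\delta}$ is convex on the ball $B(0,R)$ provided \[\lambda\ge\frac{\delta d+b+\sqrt{(\delta d+b)^2+2\delta mR^2}}{2\delta m}.\] (ii) If $f(y)=\frac{\kappa}{2}\|y\|^2+V(y)$ for some $\kappa>0$, where $V$ is bounded with $\operatorname{osc}(V):=\sup V-\inf V<\infty$, then $f^{\lambda,\delta}$ is convex on $\mathbb{R}^d$ provided \[\lambda\ge\frac{e^{\operatorname{osc}(V)/\delta}-1}{\kappa}.\]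
   Context: The soft Moreau envelope is $f^{\lambda,\delta}(x)=-\delta\log\mathbb{E}_{y\sim\mathcal N(x,\lambda\delta I)}[\exp(-f(y)/\delta)]$, where $\mathcal N(x,\lambda\delta I)$ is the Gaussian with mean $x$ and covariance $\lambda\delta I$. *)

theory Defs
  imports "HOL-Analysis.Analysis"
begin

definition gauss_pdf :: "real \<Rightarrow> 'a::euclidean_space \<Rightarrow> 'a \<Rightarrow> real" where
  "gauss_pdf s x y = (2 * pi * s) powr (- real DIM('a) / 2) * exp (- (norm (y - x))\<^sup>2 / (2 * s))"

text \<open>Soft Moreau envelope
  f^{lam,delta}(x) = - delta * log E_{y ~ N(x, lam*delta I)} [exp(- f y / delta)].\<close>
definition soft_moreau :: "('a::euclidean_space \<Rightarrow> real) \<Rightarrow> real \<Rightarrow> real \<Rightarrow> 'a \<Rightarrow> real" where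
  "soft_moreau f lam \<delta> x =
     - \<delta> * ln (\<integral>y. gauss_pdf (lam * \<delta>) x y * exp (- f y / \<delta>) \<partial>lborel)"

end

theory Submission
  imports Defs
begin

(* Write h = exp (- f / delta) and s = lambda delta. Up to an additive constant the soft Moreau
   envelope is - delta ln Z, where Z p = integral of h y exp (- |y - p|^2 / (2 s)) dy. Differentiating
   twice under the integral along p + t v gives
     (- ln Z)'' = (|v|^2 - Var_p ((y - p) . v) / s) / s,
   the variance being taken under the tilted probability measure proportional to
   h y exp (- |y - p|^2 / (2 s)) dy. Hence - ln Z is convex wherever some second moment
   E_p ((y - p) . v - c)^2 is at most s |v|^2.
   (i) The tilted density is exp (- U / delta) with U = f + |. - p|^2 / (2 lambda), whose gradient is
   coercive. Comparing it with its dilation y |-> exp (- U (r y) / delta) and letting r -> 1 is a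
   derivative-free integration by parts, giving (m + 1/(2 lambda)) E_p |y|^2 <= delta d + b + |p|^2/(2 lambda);
   the threshold on lambda turns this into E_p |y|^2 <= s, so c = - p . v works.
   (ii) h lies between exp (- sup V / delta) and exp (- inf V / delta) times the Gaussian
   exp (- kappa |y|^2 / (2 delta)), whose tilted measure is again Gaussian with covariance
   s sigma / (s + sigma) for sigma = delta / kappa; the threshold on lambda absorbs the factor
   exp (osc V / delta). *)

lemma has_real_derivative_integral_dominated:
  fixes F F' :: "real \<Rightarrow> 'a \<Rightarrow> real" and w :: "'a \<Rightarrow> real"
  assumes deriv: "\<And>t y. ((\<lambda>t. F t y) has_real_derivative F' t y) (at t)"
    and F_meas: "\<And>t. F t \<in> borel_measurable M" and F'_meas: "\<And>t. F' t \<in> borel_measurable M"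
    and F_int: "\<And>t. integrable M (F t)" and w_int: "integrable M w"
    and dominated: "\<And>t y. \<bar>F' t y\<bar> \<le> w y"
  shows "((\<lambda>t. \<integral>y. F t y \<partial>M) has_real_derivative (\<integral>y. F' t y \<partial>M)) (at t)"
  unfolding has_field_derivative_iff tendsto_at_iff_sequentially
proof (intro allI impI)
  fix X :: "nat \<Rightarrow> real" assume X: "\<forall>i. X i \<in> UNIV - {t}" "X \<longlonglongrightarrow> t"
  define q where "q i y = (F (X i) y - F t y) / (X i - t)" for i y
  have quotient: "((\<lambda>u. ((\<integral>y. F u y \<partial>M) - (\<integral>y. F t y \<partial>M)) / (u - t)) \<circ> X) i = (\<integral>y. q i y \<partial>M)" for i
    unfolding q_def comp_def using F_int by (simp add: integral_diff)
  have q_bound: "norm (q i y) \<le> w y" for i y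
  proof -
    have "X i \<noteq> t" using X(1) by auto
    then have "min t (X i) < max t (X i)" by (auto simp: min_def max_def)
    then obtain z where "F (max t (X i)) y - F (min t (X i)) y = (max t (X i) - min t (X i)) * F' z y"
      using MVT2[of "min t (X i)" "max t (X i)" "\<lambda>t. F t y" "\<lambda>t. F' t y"] deriv by blast
    then have "q i y = F' z y"
      using \<open>X i \<noteq> t\<close> unfolding q_def by (cases "t < X i") (auto simp: field_simps min_def max_def)
    then show ?thesis using dominated[of z y] by simp
  qed
  have q_lim: "(\<lambda>i. q i y) \<longlonglongrightarrow> F' t y" for y
  proof -
    have "((\<lambda>u. (F u y - F t y) / (u - t)) \<longlongrightarrow> F' t y) (at t)"
      using deriv[of y t] unfolding has_field_derivative_iff by simp
    then show ?thesis unfolding tendsto_at_iff_sequentially q_def comp_def using X by auto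
  qed
  have "q i \<in> borel_measurable M" for i
    unfolding q_def by (intro borel_measurable_divide borel_measurable_diff F_meas borel_measurable_const)
  then show "((\<lambda>u. ((\<integral>y. F u y \<partial>M) - (\<integral>y. F t y \<partial>M)) / (u - t)) \<circ> X) \<longlonglongrightarrow> (\<integral>y. F' t y \<partial>M)"
    unfolding quotient
    by (intro integral_dominated_convergence[where w = w]) (use F'_meas w_int q_bound q_lim in auto)
qed

lemma convex_on_second_derivative_along_lines:
  fixes \<Phi> :: "'a::real_normed_vector \<Rightarrow> real"
  assumes S: "convex S"
    and d1: "\<And>x v t. ((\<lambda>t. \<Phi> (x + t *\<^sub>R v)) has_real_derivative \<Phi>' (x + t *\<^sub>R v) v) (at t)"
    and d2: "\<And>x v t. ((\<lambda>t. \<Phi>' (x + t *\<^sub>R v) v) has_real_derivative \<Phi>'' (x + t *\<^sub>R v) v) (at t)"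
    and nonneg: "\<And>p v. p \<in> S \<Longrightarrow> \<Phi>'' p v \<ge> 0"
  shows "convex_on S \<Phi>"
proof (rule convex_onI[OF _ S])
  fix t :: real and x y assume t: "0 < t" "t < 1" and xy: "x \<in> S" "y \<in> S"
  have segment: "x + u *\<^sub>R (y - x) = (1 - u) *\<^sub>R x + u *\<^sub>R y" for u
    by (simp add: algebra_simps)
  have "convex_on {0..1} (\<lambda>u. \<Phi> (x + u *\<^sub>R (y - x)))"
  proof (rule f''_ge0_imp_convex[OF convex_real_interval(5) d1 d2])
    show "0 \<le> \<Phi>'' (x + u *\<^sub>R (y - x)) (y - x)" if "u \<in> {0..1}" for u
      using that convexD[OF S xy, of "1 - u" u] by (intro nonneg) (simp add: segment)
  qed
  from convex_onD[OF this, of t 0 1] t show "\<Phi> ((1 - t) *\<^sub>R x + t *\<^sub>R y) \<le> (1 - t) * \<Phi> x + t * \<Phi> y"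
    by (simp add: segment)
qed

lemma integral_pos_lborel:
  fixes f :: "'a::euclidean_space \<Rightarrow> real"
  assumes "integrable lborel f" and "\<And>y. f y > 0"
  shows "(\<integral>y. f y \<partial>lborel) > 0"
proof -
  have "(\<integral>y. f y \<partial>lborel) \<noteq> 0"
  proof
    assume "(\<integral>y. f y \<partial>lborel) = 0"
    then have "AE y in lborel. f y = 0"
      using assms by (subst integral_nonneg_eq_0_iff_AE[symmetric]) (auto intro: less_imp_le)
    then have "AE (y::'a) in lborel. False"
      by (rule AE_mp) (use assms(2) in \<open>auto intro!: AE_I2 simp: less_imp_neq[symmetric]\<close>)
    then show False
      using ae_filter_eq_bot_iff[of "lborel :: 'a measure"] by (simp add: trivial_limit_def)
  qed
  moreover have "(\<integral>y. f y \<partial>lborel) \<ge> 0"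
    using assms by (intro integral_nonneg_AE AE_I2) (auto intro: less_imp_le)
  ultimately show ?thesis by simp
qed

lemma nn_integral_euclidean_affine:
  fixes f :: "'a::euclidean_space \<Rightarrow> ennreal" and c :: real
  assumes [measurable]: "f \<in> borel_measurable borel" and c: "c \<noteq> 0"
  shows "(\<integral>\<^sup>+x. f x \<partial>lborel) = ennreal (\<bar>c\<bar> ^ DIM('a)) * (\<integral>\<^sup>+x. f (t + c *\<^sub>R x) \<partial>lborel)"
  by (subst lborel_affine[OF c, of t]) (simp add: nn_integral_density nn_integral_distr nn_integral_cmult)

lemma lborel_integrable_euclidean_affine:
  fixes f :: "'a::euclidean_space \<Rightarrow> real"
  assumes f: "integrable lborel f" and c: "c \<noteq> 0"
  shows "integrable lborel (\<lambda>x. f (t + c *\<^sub>R x))"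
  using f f[THEN borel_measurable_integrable] c unfolding integrable_iff_bounded
  by (subst (asm) nn_integral_euclidean_affine[where c = c and t = t]) (auto simp: ennreal_mult_less_top)

lemma lborel_integral_euclidean_affine:
  fixes f :: "'a::euclidean_space \<Rightarrow> real"
  assumes [measurable]: "f \<in> borel_measurable borel" and c: "c \<noteq> 0"
  shows "(\<integral>x. f x \<partial>lborel) = \<bar>c\<bar> ^ DIM('a) * (\<integral>x. f (t + c *\<^sub>R x) \<partial>lborel)"
  by (subst lborel_affine[OF c, of t]) (simp add: integral_density integral_distr)

lemma integral_le_of_dilation:
  fixes e w :: "'a::euclidean_space \<Rightarrow> real"
  assumes e: "integrable lborel e" and ew: "integrable lborel (\<lambda>y. e y * w y)" and r: "r > 0"
    and dilation: "\<And>y. e y * (1 + w y) \<le> e (r *\<^sub>R y)"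
  shows "(\<integral>y. e y * w y \<partial>lborel) \<le> (1 / r ^ DIM('a) - 1) * (\<integral>y. e y \<partial>lborel)"
proof -
  have "(\<integral>y. e y \<partial>lborel) + (\<integral>y. e y * w y \<partial>lborel) = (\<integral>y. e y * (1 + w y) \<partial>lborel)"
    using e ew by (simp add: distrib_left)
  also have "\<dots> \<le> (\<integral>y. e (r *\<^sub>R y) \<partial>lborel)"
    using e ew lborel_integrable_euclidean_affine[OF e, of r 0] r
    by (intro integral_mono dilation) (simp_all add: distrib_left)
  also have "\<dots> = (\<integral>y. e y \<partial>lborel) / r ^ DIM('a)"
    using lborel_integral_euclidean_affine[of e r 0] borel_measurable_integrable[OF e] r by simp
  finally show ?thesis by (simp add: algebra_simps)
qed

lemma tendsto_inverse_power_difference_quotient: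
  "((\<lambda>r::real. (1 / r ^ n - 1) / (1 - r)) \<longlongrightarrow> real n) (at_left 1)"
proof -
  have "((\<lambda>r::real. 1 / r ^ n) has_real_derivative - real n) (at 1)"
    by (auto intro!: derivative_eq_intros)
  then have "((\<lambda>r::real. (1 / r ^ n - 1) / (r - 1)) \<longlongrightarrow> - real n) (at 1)"
    unfolding has_field_derivative_iff by simp
  then have "((\<lambda>r::real. - ((1 / r ^ n - 1) / (r - 1))) \<longlongrightarrow> - (- real n)) (at 1)"
    by (rule tendsto_minus)
  moreover have "(\<lambda>r::real. - ((1 / r ^ n - 1) / (r - 1))) = (\<lambda>r. (1 / r ^ n - 1) / (1 - r))"
    by (simp add: fun_eq_iff minus_divide_right)
  ultimately have "((\<lambda>r::real. (1 / r ^ n - 1) / (1 - r)) \<longlongrightarrow> real n) (at 1)"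
    by simp
  then show ?thesis
    by (rule tendsto_mono[OF at_le[OF subset_UNIV]])
qed

definition gauss_kernel :: "real \<Rightarrow> 'a::real_inner \<Rightarrow> 'a \<Rightarrow> real" where
  "gauss_kernel s p y = exp (- (norm (y - p))\<^sup>2 / (2 * s))"

lemma gauss_kernel_pos [simp]: "gauss_kernel s p y > 0"
  by (simp add: gauss_kernel_def)

lemma gauss_kernel_nonneg [simp]: "gauss_kernel s p y \<ge> 0"
  by (simp add: less_imp_le)

lemma gauss_kernel_le_1: "s > 0 \<Longrightarrow> gauss_kernel s p y \<le> 1"
  by (simp add: gauss_kernel_def)

lemma borel_measurable_gauss_kernel [measurable]:
  "gauss_kernel s p \<in> borel_measurable (borel :: 'a::euclidean_space measure)"
  unfolding gauss_kernel_def by measurable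

lemma power2_norm_mult_gauss_kernel_le:
  assumes "s > 0"
  shows "(norm (y - p))\<^sup>2 * gauss_kernel s p y \<le> 2 * s"
proof -
  define q where "q = (norm (y - p))\<^sup>2 / (2 * s)"
  have "q \<le> exp q"
    using exp_ge_add_one_self[of q] by linarith
  then have "q * exp (- q) \<le> 1"
    by (simp add: exp_minus field_simps)
  moreover have "(norm (y - p))\<^sup>2 * gauss_kernel s p y = 2 * s * (q * exp (- q))"
    using assms by (simp add: q_def gauss_kernel_def)
  ultimately show ?thesis
    using assms by (simp add: mult_left_le)
qed

lemma abs_mult_gauss_kernel_le:
  assumes "s > 0" "A \<ge> 0" "B \<ge> 0" and c: "\<bar>c\<bar> \<le> A + B * (norm (y - p))\<^sup>2"
  shows "\<bar>c * gauss_kernel s p y\<bar> \<le> A + 2 * B * s"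
proof -
  have "\<bar>c * gauss_kernel s p y\<bar> \<le> (A + B * (norm (y - p))\<^sup>2) * gauss_kernel s p y"
    using c by (simp add: abs_mult less_imp_le mult_right_mono)
  also have "\<dots> = A * gauss_kernel s p y + B * ((norm (y - p))\<^sup>2 * gauss_kernel s p y)"
    by (simp add: algebra_simps)
  also have "\<dots> \<le> A + B * (2 * s)"
    using assms power2_norm_mult_gauss_kernel_le gauss_kernel_le_1
    by (intro add_mono mult_left_le mult_left_mono) auto
  finally show ?thesis by simp
qed

lemma le_1_plus_power2: "x \<le> 1 + x\<^sup>2" for x :: real
proof -
  have "0 \<le> (x - 1)\<^sup>2" by simp
  then have "0 \<le> x\<^sup>2 + 1 - 2 * x" by (simp add: power2_diff)
  then show ?thesis using zero_le_power2[of x] by linarith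
qed

lemma power2_inner_le: "(x \<bullet> y)\<^sup>2 \<le> (norm x)\<^sup>2 * (norm y)\<^sup>2" for x y :: "'a::real_inner"
  using Cauchy_Schwarz_ineq[of x y] by (simp add: power2_norm_eq_inner)

lemma power2_norm_le_shift: "(norm y)\<^sup>2 \<le> 2 * (norm p)\<^sup>2 + 2 * (norm (y - p))\<^sup>2" for y p :: "'a::real_normed_vector"
proof -
  have "norm y \<le> norm (y - p) + norm p"
    using norm_triangle_ineq[of "y - p" p] by simp
  then have "(norm y)\<^sup>2 \<le> (norm (y - p) + norm p)\<^sup>2"
    by (simp add: power_mono)
  then show ?thesis
    using zero_le_power2[of "norm (y - p) - norm p"] unfolding power2_sum power2_diff by linarith
qed

lemma gauss_kernel_line_deriv:
  fixes x v y :: "'a::real_inner"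
  assumes "s \<noteq> 0"
  shows "((\<lambda>t. gauss_kernel s (x + t *\<^sub>R v) y) has_real_derivative
          ((y - (x + t *\<^sub>R v)) \<bullet> v / s * gauss_kernel s (x + t *\<^sub>R v) y)) (at t)"
proof -
  have sq: "(norm (y - (x + t *\<^sub>R v)))\<^sup>2 = (norm (y - x))\<^sup>2 - 2 * t * ((y - x) \<bullet> v) + t\<^sup>2 * (norm v)\<^sup>2" for t
    unfolding power2_norm_eq_inner
    by (simp add: inner_diff_left inner_diff_right inner_commute power2_eq_square algebra_simps)
  have lin: "(y - (x + t *\<^sub>R v)) \<bullet> v = (y - x) \<bullet> v - t * (norm v)\<^sup>2"
    by (simp add: inner_diff_left inner_add_left power2_norm_eq_inner)
  have "((\<lambda>t. - ((norm (y - x))\<^sup>2 - 2 * t * ((y - x) \<bullet> v) + t\<^sup>2 * (norm v)\<^sup>2) / (2 * s))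
          has_real_derivative ((y - x) \<bullet> v - t * (norm v)\<^sup>2) / s) (at t)"
    using assms by (auto intro!: derivative_eq_intros simp: field_simps)
  from DERIV_exp[THEN DERIV_chain2, OF this] show ?thesis
    unfolding gauss_kernel_def sq lin by (simp add: mult.commute)
qed

lemma gauss_kernel_line_deriv2:
  fixes x v y :: "'a::real_inner"
  assumes "s \<noteq> 0"
  shows "((\<lambda>t. (y - (x + t *\<^sub>R v)) \<bullet> v / s * gauss_kernel s (x + t *\<^sub>R v) y) has_real_derivative
          (((y - (x + t *\<^sub>R v)) \<bullet> v)\<^sup>2 / s\<^sup>2 - (norm v)\<^sup>2 / s) * gauss_kernel s (x + t *\<^sub>R v) y) (at t)"
proof -
  have lin: "(y - (x + t *\<^sub>R v)) \<bullet> v / s = (y - x) \<bullet> v / s - t * ((norm v)\<^sup>2 / s)" for t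
    by (simp add: inner_diff_left inner_add_left power2_norm_eq_inner diff_divide_distrib add_divide_distrib)
  have "((\<lambda>t. (y - (x + t *\<^sub>R v)) \<bullet> v / s) has_real_derivative - (norm v)\<^sup>2 / s) (at t)"
    unfolding lin using assms by (auto intro!: derivative_eq_intros)
  from DERIV_mult[OF this gauss_kernel_line_deriv[OF assms]] show ?thesis
    using assms by (simp add: power2_eq_square field_simps)
qed

definition conv_gauss :: "('a::euclidean_space \<Rightarrow> real) \<Rightarrow> real \<Rightarrow> 'a \<Rightarrow> real" where
  "conv_gauss h s p = (\<integral>y. h y * gauss_kernel s p y \<partial>lborel)"

definition conv_gauss_deriv :: "('a::euclidean_space \<Rightarrow> real) \<Rightarrow> real \<Rightarrow> 'a \<Rightarrow> 'a \<Rightarrow> real" where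
  "conv_gauss_deriv h s p v = (\<integral>y. h y * ((y - p) \<bullet> v / s * gauss_kernel s p y) \<partial>lborel)"

definition conv_gauss_deriv2 :: "('a::euclidean_space \<Rightarrow> real) \<Rightarrow> real \<Rightarrow> 'a \<Rightarrow> 'a \<Rightarrow> real" where
  "conv_gauss_deriv2 h s p v =
     (\<integral>y. h y * ((((y - p) \<bullet> v)\<^sup>2 / s\<^sup>2 - (norm v)\<^sup>2 / s) * gauss_kernel s p y) \<partial>lborel)"

context
  fixes h :: "'a::euclidean_space \<Rightarrow> real" and s :: real
  assumes h_int: "integrable lborel h" and s_pos: "s > 0"
begin

lemma borel_measurable_conv_gauss_weight [measurable]: "h \<in> borel_measurable borel"
  using borel_measurable_integrable[OF h_int] by simp

lemma integrable_mult_gauss_kernel: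
  assumes [measurable]: "g \<in> borel_measurable borel" and "B \<ge> 0"
    and g: "\<And>y. \<bar>g y\<bar> \<le> A + B * (norm (y - p))\<^sup>2"
  shows "integrable lborel (\<lambda>y. h y * (g y * gauss_kernel s p y))"
proof (rule Bochner_Integration.integrable_bound[where f = "\<lambda>y. \<bar>h y\<bar> * (A + 2 * B * s)"])
  have "A \<ge> 0" using g[of p] by auto
  show "AE y in lborel. norm (h y * (g y * gauss_kernel s p y)) \<le> norm (\<bar>h y\<bar> * (A + 2 * B * s))"
  proof (rule AE_I2)
    fix y
    have "\<bar>g y * gauss_kernel s p y\<bar> \<le> A + 2 * B * s"
      by (rule abs_mult_gauss_kernel_le[OF s_pos \<open>A \<ge> 0\<close> \<open>B \<ge> 0\<close> g])
    moreover have "A + 2 * B * s \<ge> 0" using \<open>A \<ge> 0\<close> \<open>B \<ge> 0\<close> s_pos by simp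
    ultimately show "norm (h y * (g y * gauss_kernel s p y)) \<le> norm (\<bar>h y\<bar> * (A + 2 * B * s))"
      by (simp add: abs_mult mult_left_mono)
  qed
qed (use h_int in auto)

lemma abs_inner_div_le:
  "\<bar>(y - q) \<bullet> v / s\<bar> \<le> norm v / s + norm v / s * (norm (y - q))\<^sup>2"
proof -
  have "\<bar>(y - q) \<bullet> v\<bar> \<le> norm v * (1 + (norm (y - q))\<^sup>2)"
    using order_trans[OF Cauchy_Schwarz_ineq2 mult_right_mono[OF le_1_plus_power2 norm_ge_zero]]
    by (simp add: mult.commute)
  then show ?thesis
    using s_pos by (simp add: divide_le_eq algebra_simps)
qed

lemma abs_inner_sq_div_le:
  "\<bar>((y - q) \<bullet> v)\<^sup>2 / s\<^sup>2 - (norm v)\<^sup>2 / s\<bar> \<le> (norm v)\<^sup>2 / s + (norm v)\<^sup>2 / s\<^sup>2 * (norm (y - q))\<^sup>2"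
proof -
  have "((y - q) \<bullet> v)\<^sup>2 / s\<^sup>2 \<le> (norm v)\<^sup>2 / s\<^sup>2 * (norm (y - q))\<^sup>2"
    using divide_right_mono[OF power2_inner_le[of "y - q" v], of "s\<^sup>2"] by (simp add: mult.commute)
  moreover have "0 \<le> ((y - q) \<bullet> v)\<^sup>2 / s\<^sup>2" "0 \<le> (norm v)\<^sup>2 / s"
    using s_pos by simp_all
  ultimately show ?thesis unfolding abs_le_iff by linarith
qed

lemma conv_gauss_line_deriv:
  "((\<lambda>t. conv_gauss h s (x + t *\<^sub>R v)) has_real_derivative conv_gauss_deriv h s (x + t *\<^sub>R v) v) (at t)"
  unfolding conv_gauss_def conv_gauss_deriv_def
proof (rule has_real_derivative_integral_dominated[where w = "\<lambda>y. \<bar>h y\<bar> * (norm v / s + 2 * (norm v / s) * s)"])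
  show "((\<lambda>t. h y * gauss_kernel s (x + t *\<^sub>R v) y) has_real_derivative
          h y * ((y - (x + t *\<^sub>R v)) \<bullet> v / s * gauss_kernel s (x + t *\<^sub>R v) y)) (at t)" for t y
    using s_pos by (intro DERIV_cmult gauss_kernel_line_deriv) simp
  show "integrable lborel (\<lambda>y. h y * gauss_kernel s (x + t *\<^sub>R v) y)" for t
    using integrable_mult_gauss_kernel[of "\<lambda>_. 1" 0 1 "x + t *\<^sub>R v"] by simp
  show "\<bar>h y * ((y - (x + t *\<^sub>R v)) \<bullet> v / s * gauss_kernel s (x + t *\<^sub>R v) y)\<bar>
      \<le> \<bar>h y\<bar> * (norm v / s + 2 * (norm v / s) * s)" for t y
    unfolding abs_mult[of "h y"] using s_pos
    by (intro mult_left_mono abs_mult_gauss_kernel_le[OF s_pos _ _ abs_inner_div_le]) auto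
qed (use h_int in auto)

lemma conv_gauss_deriv_line_deriv:
  "((\<lambda>t. conv_gauss_deriv h s (x + t *\<^sub>R v) v) has_real_derivative conv_gauss_deriv2 h s (x + t *\<^sub>R v) v) (at t)"
  unfolding conv_gauss_deriv_def conv_gauss_deriv2_def
proof (rule has_real_derivative_integral_dominated[where w = "\<lambda>y. \<bar>h y\<bar> * ((norm v)\<^sup>2 / s + 2 * ((norm v)\<^sup>2 / s\<^sup>2) * s)"])
  show "((\<lambda>t. h y * ((y - (x + t *\<^sub>R v)) \<bullet> v / s * gauss_kernel s (x + t *\<^sub>R v) y)) has_real_derivative
          h y * ((((y - (x + t *\<^sub>R v)) \<bullet> v)\<^sup>2 / s\<^sup>2 - (norm v)\<^sup>2 / s) * gauss_kernel s (x + t *\<^sub>R v) y)) (at t)" for t y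
    using s_pos by (intro DERIV_cmult gauss_kernel_line_deriv2) simp
  show "integrable lborel (\<lambda>y. h y * ((y - (x + t *\<^sub>R v)) \<bullet> v / s * gauss_kernel s (x + t *\<^sub>R v) y))" for t
    by (rule integrable_mult_gauss_kernel[OF _ _ abs_inner_div_le]) (auto intro!: borel_measurable_continuous_onI continuous_intros divide_nonneg_pos simp: s_pos)
  show "\<bar>h y * ((((y - (x + t *\<^sub>R v)) \<bullet> v)\<^sup>2 / s\<^sup>2 - (norm v)\<^sup>2 / s) * gauss_kernel s (x + t *\<^sub>R v) y)\<bar>
      \<le> \<bar>h y\<bar> * ((norm v)\<^sup>2 / s + 2 * ((norm v)\<^sup>2 / s\<^sup>2) * s)" for t y
    unfolding abs_mult[of "h y"] using s_pos
    by (intro mult_left_mono abs_mult_gauss_kernel_le[OF s_pos _ _ abs_inner_sq_div_le]) auto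
qed (use h_int in auto)

lemma integrable_conv_gauss: "integrable lborel (\<lambda>y. h y * gauss_kernel s p y)"
  using integrable_mult_gauss_kernel[of "\<lambda>_. 1" 0 1 p] by simp

lemma integrable_power2_norm_mult_gauss_kernel:
  "integrable lborel (\<lambda>y. h y * ((norm y)\<^sup>2 * gauss_kernel s p y))"
  by (rule integrable_mult_gauss_kernel[where A = "2 * (norm p)\<^sup>2" and B = 2])
     (simp_all add: power2_norm_le_shift)

lemma integrable_centered_moment:
  "integrable lborel (\<lambda>y. h y * (((y - p) \<bullet> v - c)\<^sup>2 * gauss_kernel s p y))"
proof (rule integrable_mult_gauss_kernel[where A = "2 * c\<^sup>2" and B = "2 * (norm v)\<^sup>2"])
  show "\<bar>((y - p) \<bullet> v - c)\<^sup>2\<bar> \<le> 2 * c\<^sup>2 + 2 * (norm v)\<^sup>2 * (norm (y - p))\<^sup>2" for y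
  proof -
    have "((y - p) \<bullet> v - c)\<^sup>2 \<le> 2 * c\<^sup>2 + 2 * ((y - p) \<bullet> v)\<^sup>2"
      using zero_le_power2[of "(y - p) \<bullet> v + c"] unfolding power2_sum power2_diff by linarith
    moreover have "((y - p) \<bullet> v)\<^sup>2 \<le> (norm v)\<^sup>2 * (norm (y - p))\<^sup>2"
      using power2_inner_le[of "y - p" v] by (simp add: mult.commute)
    ultimately show ?thesis
      unfolding abs_power2 by linarith
  qed
qed (auto intro!: borel_measurable_continuous_onI continuous_intros)

lemma conv_gauss_pos: "(\<And>y. 0 < h y) \<Longrightarrow> conv_gauss h s p > 0"
  unfolding conv_gauss_def by (intro integral_pos_lborel integrable_conv_gauss) simp

lemma conv_gauss_centered_moment:
  "(\<integral>y. h y * (((y - p) \<bullet> v - c)\<^sup>2 * gauss_kernel s p y) \<partial>lborel)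
     = s\<^sup>2 * conv_gauss_deriv2 h s p v + s * (norm v)\<^sup>2 * conv_gauss h s p
       - 2 * c * s * conv_gauss_deriv h s p v + c\<^sup>2 * conv_gauss h s p"
proof -
  define w where "w y = (y - p) \<bullet> v" for y
  define I0 I1 I2 where "I0 y = h y * gauss_kernel s p y"
    and "I1 y = h y * (w y / s * gauss_kernel s p y)"
    and "I2 y = h y * (((w y)\<^sup>2 / s\<^sup>2 - (norm v)\<^sup>2 / s) * gauss_kernel s p y)" for y
  have "integrable lborel I0"
    unfolding I0_def by (rule integrable_conv_gauss)
  moreover have "integrable lborel I1"
    unfolding I1_def w_def by (rule integrable_mult_gauss_kernel[OF _ _ abs_inner_div_le])
       (auto intro!: borel_measurable_continuous_onI continuous_intros divide_nonneg_pos simp: s_pos)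
  moreover have "integrable lborel I2"
    unfolding I2_def w_def by (rule integrable_mult_gauss_kernel[OF _ _ abs_inner_sq_div_le])
       (auto intro!: borel_measurable_continuous_onI continuous_intros simp: s_pos)
  moreover have "h y * ((w y - c)\<^sup>2 * gauss_kernel s p y)
      = s\<^sup>2 * I2 y + s * (norm v)\<^sup>2 * I0 y - 2 * c * s * I1 y + c\<^sup>2 * I0 y" for y
    using s_pos by (simp add: I0_def I1_def I2_def power2_eq_square field_simps)
  ultimately show ?thesis
    unfolding conv_gauss_def conv_gauss_deriv_def conv_gauss_deriv2_def
      w_def[symmetric] I0_def[symmetric] I1_def[symmetric] I2_def[symmetric]
    by simp
qed

lemma conv_gauss_deriv2_mult_le_square:
  assumes "\<And>y. 0 \<le> h y"
    and moment: "(\<integral>y. h y * (((y - p) \<bullet> v - c)\<^sup>2 * gauss_kernel s p y) \<partial>lborel)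
                   \<le> s * (norm v)\<^sup>2 * conv_gauss h s p"
  shows "conv_gauss_deriv2 h s p v * conv_gauss h s p \<le> (conv_gauss_deriv h s p v)\<^sup>2"
proof -
  define Z Z' Z'' where "Z = conv_gauss h s p" and "Z' = conv_gauss_deriv h s p v"
    and "Z'' = conv_gauss_deriv2 h s p v"
  have "Z \<ge> 0"
    unfolding Z_def conv_gauss_def
    by (intro integral_nonneg_AE AE_I2 mult_nonneg_nonneg assms(1) gauss_kernel_nonneg)
  have "s\<^sup>2 * Z'' \<le> 2 * c * s * Z' - c\<^sup>2 * Z"
    using moment unfolding conv_gauss_centered_moment Z_def[symmetric] Z'_def[symmetric] Z''_def[symmetric]
    by simp
  then have "s\<^sup>2 * (Z'' * Z) \<le> (2 * c * s * Z' - c\<^sup>2 * Z) * Z"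
    using \<open>Z \<ge> 0\<close> by (simp add: mult_right_mono mult.assoc[symmetric])
  also have "\<dots> = s\<^sup>2 * Z'\<^sup>2 - (s * Z' - c * Z)\<^sup>2"
    by (simp add: power2_eq_square algebra_simps)
  also have "\<dots> \<le> s\<^sup>2 * Z'\<^sup>2"
    by simp
  finally show ?thesis
    using s_pos unfolding Z_def Z'_def Z''_def by simp
qed

lemma convex_on_neg_ln_conv_gauss:
  assumes pos: "\<And>y. 0 < h y" and "convex S"
    and hessian: "\<And>p v. p \<in> S \<Longrightarrow> conv_gauss_deriv2 h s p v * conv_gauss h s p \<le> (conv_gauss_deriv h s p v)\<^sup>2"
  shows "convex_on S (\<lambda>p. - ln (conv_gauss h s p))"
proof (rule convex_on_second_derivative_along_lines[OF \<open>convex S\<close>])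
  show "((\<lambda>t. - ln (conv_gauss h s (x + t *\<^sub>R v))) has_real_derivative
          - (conv_gauss_deriv h s (x + t *\<^sub>R v) v / conv_gauss h s (x + t *\<^sub>R v))) (at t)" for x v t
    using DERIV_minus[OF DERIV_chain2[OF DERIV_ln_divide[OF conv_gauss_pos[OF pos]] conv_gauss_line_deriv]]
    by simp
  show "((\<lambda>t. - (conv_gauss_deriv h s (x + t *\<^sub>R v) v / conv_gauss h s (x + t *\<^sub>R v))) has_real_derivative
          ((conv_gauss_deriv h s (x + t *\<^sub>R v) v)\<^sup>2 - conv_gauss_deriv2 h s (x + t *\<^sub>R v) v * conv_gauss h s (x + t *\<^sub>R v))
            / (conv_gauss h s (x + t *\<^sub>R v))\<^sup>2) (at t)" for x v t
    using conv_gauss_pos[OF pos, of "x + t *\<^sub>R v"]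
    by (auto intro!: derivative_eq_intros conv_gauss_line_deriv conv_gauss_deriv_line_deriv
             simp: power2_eq_square field_simps)
  show "0 \<le> ((conv_gauss_deriv h s p v)\<^sup>2 - conv_gauss_deriv2 h s p v * conv_gauss h s p) / (conv_gauss h s p)\<^sup>2"
    if "p \<in> S" for p v
    using hessian[OF that] by simp
qed

end

lemma conv_gauss_mono:
  assumes "integrable lborel h\<^sub>1" "integrable lborel h\<^sub>2" "s > 0" and le: "\<And>y. h\<^sub>1 y \<le> h\<^sub>2 y"
  shows "conv_gauss h\<^sub>1 s p \<le> conv_gauss h\<^sub>2 s p"
  unfolding conv_gauss_def using assms integrable_conv_gauss
  by (intro integral_mono mult_right_mono le) auto

lemma soft_moreau_eq_neg_ln_conv_gauss:
  fixes f :: "'a::euclidean_space \<Rightarrow> real"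
  assumes "lam > 0" "\<delta> > 0" "integrable lborel (\<lambda>y. exp (- f y / \<delta>))"
  shows "soft_moreau f lam \<delta>
           = (\<lambda>x. - \<delta> * ln ((2 * pi * (lam * \<delta>)) powr (- real DIM('a) / 2))
                  + \<delta> * - ln (conv_gauss (\<lambda>y. exp (- f y / \<delta>)) (lam * \<delta>) x))"
proof (rule ext)
  fix x
  define K where "K = (2 * pi * (lam * \<delta>)) powr (- real DIM('a) / 2)"
  define Z where "Z = conv_gauss (\<lambda>y. exp (- f y / \<delta>)) (lam * \<delta>) x"
  have "K > 0" using assms by (simp add: K_def)
  have "Z > 0" using assms unfolding Z_def by (intro conv_gauss_pos) simp_all
  have "(\<integral>y. gauss_pdf (lam * \<delta>) x y * exp (- f y / \<delta>) \<partial>lborel)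
      = (\<integral>y. K * (exp (- f y / \<delta>) * gauss_kernel (lam * \<delta>) x y) \<partial>lborel)"
    unfolding gauss_pdf_def gauss_kernel_def K_def by (simp add: mult_ac)
  also have "\<dots> = K * Z"
    unfolding Z_def conv_gauss_def by simp
  finally have "soft_moreau f lam \<delta> x = - \<delta> * ln (K * Z)"
    by (simp add: soft_moreau_def)
  also have "\<dots> = - \<delta> * ln K + \<delta> * - ln Z"
    using \<open>K > 0\<close> \<open>Z > 0\<close> by (simp add: ln_mult algebra_simps)
  finally show "soft_moreau f lam \<delta> x = - \<delta> * ln K + \<delta> * - ln Z" .
qed

lemma convex_on_soft_moreau:
  fixes f :: "'a::euclidean_space \<Rightarrow> real"
  assumes lam: "lam > 0" and \<delta>: "\<delta> > 0" and int: "integrable lborel (\<lambda>y. exp (- f y / \<delta>))"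
    and "convex S"
    and moment: "\<And>p v. p \<in> S \<Longrightarrow> \<exists>c.
           (\<integral>y. exp (- f y / \<delta>) * (((y - p) \<bullet> v - c)\<^sup>2 * gauss_kernel (lam * \<delta>) p y) \<partial>lborel)
             \<le> lam * \<delta> * (norm v)\<^sup>2 * conv_gauss (\<lambda>y. exp (- f y / \<delta>)) (lam * \<delta>) p"
  shows "convex_on S (soft_moreau f lam \<delta>)"
proof -
  have s: "lam * \<delta> > 0" using lam \<delta> by simp
  have "convex_on S (\<lambda>p. - ln (conv_gauss (\<lambda>y. exp (- f y / \<delta>)) (lam * \<delta>) p))"
  proof (rule convex_on_neg_ln_conv_gauss[OF int s _ \<open>convex S\<close>])
    fix p v assume "p \<in> S"
    then obtain c where "(\<integral>y. exp (- f y / \<delta>) * (((y - p) \<bullet> v - c)\<^sup>2 * gauss_kernel (lam * \<delta>) p y) \<partial>lborel)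
             \<le> lam * \<delta> * (norm v)\<^sup>2 * conv_gauss (\<lambda>y. exp (- f y / \<delta>)) (lam * \<delta>) p"
      using moment by blast
    then show "conv_gauss_deriv2 (\<lambda>y. exp (- f y / \<delta>)) (lam * \<delta>) p v * conv_gauss (\<lambda>y. exp (- f y / \<delta>)) (lam * \<delta>) p
        \<le> (conv_gauss_deriv (\<lambda>y. exp (- f y / \<delta>)) (lam * \<delta>) p v)\<^sup>2"
      by (intro conv_gauss_deriv2_mult_le_square[OF int s]) simp_all
  qed simp
  then have "convex_on S (\<lambda>x. \<delta> * - ln (conv_gauss (\<lambda>y. exp (- f y / \<delta>)) (lam * \<delta>) x))"
    using \<delta> by (intro convex_on_cmul) simp_all
  then have "convex_on S (\<lambda>x. - \<delta> * ln ((2 * pi * (lam * \<delta>)) powr (- real DIM('a) / 2))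
             + \<delta> * - ln (conv_gauss (\<lambda>y. exp (- f y / \<delta>)) (lam * \<delta>) x))"
    using \<open>convex S\<close> by (intro convex_on_add) (simp_all add: convex_on_const)
  then show ?thesis
    unfolding soft_moreau_eq_neg_ln_conv_gauss[OF lam \<delta> int] .
qed

lemma coercive_gradient_ray_bound:
  fixes U :: "'a::real_inner \<Rightarrow> real" and G :: "'a \<Rightarrow> 'a"
  assumes deriv: "\<And>y. (U has_derivative (\<lambda>h. G y \<bullet> h)) (at y)"
    and coercive: "\<And>y. G y \<bullet> y \<ge> \<alpha> * (norm y)\<^sup>2 - \<beta>"
    and "\<alpha> \<ge> 0" and r: "0 < r" "r < 1"
  shows "U y - U (r *\<^sub>R y) \<ge> (1 - r) * (\<alpha> * r * (norm y)\<^sup>2 - \<beta> / r)"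
proof -
  have "\<beta> \<ge> 0" using coercive[of 0] by simp
  have "((\<lambda>\<rho>. U (\<rho> *\<^sub>R y)) has_real_derivative G (\<rho> *\<^sub>R y) \<bullet> y) (at \<rho>)" for \<rho>
    unfolding has_field_derivative_def
    by (rule has_derivative_eq_rhs[OF has_derivative_compose[OF has_derivative_scaleR_left[OF has_derivative_ident] deriv]])
       (simp add: fun_eq_iff)
  then obtain \<xi> where \<xi>: "r < \<xi>" "\<xi> < 1" and mvt: "U y - U (r *\<^sub>R y) = (1 - r) * (G (\<xi> *\<^sub>R y) \<bullet> y)"
    using MVT2[of r 1 "\<lambda>\<rho>. U (\<rho> *\<^sub>R y)" "\<lambda>\<rho>. G (\<rho> *\<^sub>R y) \<bullet> y"] r by auto
  have "\<xi> * (G (\<xi> *\<^sub>R y) \<bullet> y) \<ge> \<alpha> * \<xi>\<^sup>2 * (norm y)\<^sup>2 - \<beta>"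
    using coercive[of "\<xi> *\<^sub>R y"] \<xi> r by (simp add: power_mult_distrib)
  then have "G (\<xi> *\<^sub>R y) \<bullet> y \<ge> \<alpha> * \<xi> * (norm y)\<^sup>2 - \<beta> / \<xi>"
    using \<xi> r by (simp add: field_simps power2_eq_square)
  moreover have "\<alpha> * r * (norm y)\<^sup>2 \<le> \<alpha> * \<xi> * (norm y)\<^sup>2"
    using \<xi> \<open>\<alpha> \<ge> 0\<close> by (intro mult_right_mono mult_left_mono) auto
  moreover have "\<beta> / \<xi> \<le> \<beta> / r"
    using \<xi> r \<open>\<beta> \<ge> 0\<close> by (intro divide_left_mono) auto
  ultimately show ?thesis
    unfolding mvt using r by (intro mult_left_mono) auto
qed

lemma coercive_gradient_dilation_bound:
  fixes U :: "'a::euclidean_space \<Rightarrow> real" and G :: "'a \<Rightarrow> 'a"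
  assumes deriv: "\<And>y. (U has_derivative (\<lambda>h. G y \<bullet> h)) (at y)"
    and coercive: "\<And>y. G y \<bullet> y \<ge> \<alpha> * (norm y)\<^sup>2 - \<beta>"
    and "\<alpha> \<ge> 0" "\<delta> > 0" and r: "0 < r" "r < 1"
    and int: "integrable lborel (\<lambda>y. exp (- U y / \<delta>))"
    and int2: "integrable lborel (\<lambda>y. exp (- U y / \<delta>) * (norm y)\<^sup>2)"
  shows "\<alpha> * r * (\<integral>y. exp (- U y / \<delta>) * (norm y)\<^sup>2 \<partial>lborel) - \<beta> / r * (\<integral>y. exp (- U y / \<delta>) \<partial>lborel)
           \<le> \<delta> * (\<integral>y. exp (- U y / \<delta>) \<partial>lborel) * ((1 / r ^ DIM('a) - 1) / (1 - r))"
proof -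
  define e where "e = (\<lambda>y. exp (- U y / \<delta>))"
  define M Z where "M = (\<integral>y. e y * (norm y)\<^sup>2 \<partial>lborel)" and "Z = (\<integral>y. e y \<partial>lborel)"
  define w where "w y = (1 - r) / \<delta> * (\<alpha> * r * (norm y)\<^sup>2 - \<beta> / r)" for y :: 'a
  have "e y * (1 + w y) \<le> e (r *\<^sub>R y)" for y
  proof -
    have "w y \<le> (U y - U (r *\<^sub>R y)) / \<delta>"
      unfolding w_def using coercive_gradient_ray_bound[OF deriv coercive \<open>\<alpha> \<ge> 0\<close> r, of y] \<open>\<delta> > 0\<close>
      by (simp add: divide_right_mono)
    then have "1 + w y \<le> exp ((U y - U (r *\<^sub>R y)) / \<delta>)"
      using exp_ge_add_one_self order_trans by blast
    moreover have "e (r *\<^sub>R y) = e y * exp ((U y - U (r *\<^sub>R y)) / \<delta>)"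
      by (simp add: e_def diff_divide_distrib flip: exp_add)
    ultimately show ?thesis
      by (simp add: e_def)
  qed
  moreover have ew: "e y * w y = (1 - r) / \<delta> * (\<alpha> * r) * (e y * (norm y)\<^sup>2) - (1 - r) / \<delta> * (\<beta> / r) * e y" for y
    by (simp add: w_def algebra_simps)
  moreover have "integrable lborel e" "integrable lborel (\<lambda>y. e y * (norm y)\<^sup>2)"
    using int int2 by (simp_all add: e_def)
  ultimately have "(\<integral>y. e y * w y \<partial>lborel) \<le> (1 / r ^ DIM('a) - 1) * Z"
    unfolding Z_def using r by (intro integral_le_of_dilation) (simp_all add: ew)
  moreover have "(\<integral>y. e y * w y \<partial>lborel) = (1 - r) / \<delta> * (\<alpha> * r * M - \<beta> / r * Z)"
    unfolding ew M_def Z_def using \<open>integrable lborel e\<close> \<open>integrable lborel (\<lambda>y. e y * (norm y)\<^sup>2)\<close>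
    by (simp add: algebra_simps)
  ultimately have "\<alpha> * r * M - \<beta> / r * Z \<le> \<delta> * Z * ((1 / r ^ DIM('a) - 1) / (1 - r))"
    using r \<open>\<delta> > 0\<close> by (simp add: field_simps)
  then show ?thesis
    unfolding M_def Z_def e_def .
qed

lemma second_moment_le_of_coercive_gradient:
  fixes U :: "'a::euclidean_space \<Rightarrow> real" and G :: "'a \<Rightarrow> 'a"
  assumes deriv: "\<And>y. (U has_derivative (\<lambda>h. G y \<bullet> h)) (at y)"
    and coercive: "\<And>y. G y \<bullet> y \<ge> \<alpha> * (norm y)\<^sup>2 - \<beta>"
    and "\<alpha> \<ge> 0" "\<delta> > 0"
    and int: "integrable lborel (\<lambda>y. exp (- U y / \<delta>))"
    and int2: "integrable lborel (\<lambda>y. exp (- U y / \<delta>) * (norm y)\<^sup>2)"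
  shows "\<alpha> * (\<integral>y. exp (- U y / \<delta>) * (norm y)\<^sup>2 \<partial>lborel)
           \<le> (\<delta> * real DIM('a) + \<beta>) * (\<integral>y. exp (- U y / \<delta>) \<partial>lborel)"
proof -
  define M Z where "M = (\<integral>y. exp (- U y / \<delta>) * (norm y)\<^sup>2 \<partial>lborel)" and "Z = (\<integral>y. exp (- U y / \<delta>) \<partial>lborel)"
  have "((\<lambda>r. \<alpha> * r * M - \<beta> / r * Z) \<longlongrightarrow> \<alpha> * 1 * M - \<beta> / 1 * Z) (at_left 1)"
    by (intro tendsto_intros) auto
  moreover have "((\<lambda>r. \<delta> * Z * ((1 / r ^ DIM('a) - 1) / (1 - r))) \<longlongrightarrow> \<delta> * Z * real DIM('a)) (at_left 1)"
    by (intro tendsto_mult_left tendsto_inverse_power_difference_quotient)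
  moreover have "eventually (\<lambda>r. \<alpha> * r * M - \<beta> / r * Z \<le> \<delta> * Z * ((1 / r ^ DIM('a) - 1) / (1 - r))) (at_left 1)"
    unfolding eventually_at_left_field M_def Z_def
    using coercive_gradient_dilation_bound[OF assms(1-4) _ _ int int2] by (intro exI[of _ 0]) auto
  ultimately have "\<alpha> * M - \<beta> * Z \<le> \<delta> * Z * real DIM('a)"
    using tendsto_le[OF trivial_limit_at_left_real] by fastforce
  then show ?thesis
    unfolding M_def Z_def by (simp add: algebra_simps)
qed

lemma has_derivative_power2_norm_diff:
  "((\<lambda>y. (norm (y - p))\<^sup>2) has_derivative (\<lambda>h. 2 * ((y - p) \<bullet> h))) (at y)"
  unfolding power2_norm_eq_inner
  by (rule has_derivative_eq_rhs[OF has_derivative_inner[OF has_derivative_diff[OF has_derivative_ident has_derivative_const]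
        has_derivative_diff[OF has_derivative_ident has_derivative_const]]])
     (simp add: fun_eq_iff inner_commute)

lemma inner_add_shift_ge:
  fixes g p y :: "'a::real_inner"
  assumes "lam > 0" and coercive: "g \<bullet> y \<ge> m * (norm y)\<^sup>2 - b"
  shows "(g + (1 / lam) *\<^sub>R (y - p)) \<bullet> y \<ge> (m + 1 / (2 * lam)) * (norm y)\<^sup>2 - (b + (norm p)\<^sup>2 / (2 * lam))"
proof -
  have "(y - p) \<bullet> y \<ge> ((norm y)\<^sup>2 - (norm p)\<^sup>2) / 2"
    using zero_le_power2[of "norm (y - p)"]
    by (simp add: power2_norm_eq_inner inner_diff_left inner_diff_right inner_commute)
  then have "(1 / lam) * ((y - p) \<bullet> y) \<ge> (1 / lam) * (((norm y)\<^sup>2 - (norm p)\<^sup>2) / 2)"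
    using \<open>lam > 0\<close> by (intro mult_left_mono) auto
  moreover have "(1 / lam) * (((norm y)\<^sup>2 - (norm p)\<^sup>2) / 2) = (norm y)\<^sup>2 / (2 * lam) - (norm p)\<^sup>2 / (2 * lam)"
    using \<open>lam > 0\<close> by (simp add: field_simps)
  moreover have "(m + 1 / (2 * lam)) * (norm y)\<^sup>2 = m * (norm y)\<^sup>2 + (norm y)\<^sup>2 / (2 * lam)"
    by (simp add: algebra_simps)
  moreover have "(g + (1 / lam) *\<^sub>R (y - p)) \<bullet> y = g \<bullet> y + (1 / lam) * ((y - p) \<bullet> y)"
    by (simp add: inner_add_left)
  ultimately show ?thesis
    using coercive by linarith
qed

lemma conv_gauss_second_moment_le:
  fixes f :: "'a::euclidean_space \<Rightarrow> real" and g :: "'a \<Rightarrow> 'a"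
  assumes lam: "lam > 0" and \<delta>: "\<delta> > 0"
    and deriv: "\<And>y. (f has_derivative (\<lambda>h. g y \<bullet> h)) (at y)"
    and coercive: "\<And>y. g y \<bullet> y \<ge> m * (norm y)\<^sup>2 - b" and "m \<ge> 0"
    and int: "integrable lborel (\<lambda>y. exp (- f y / \<delta>))"
  shows "(m + 1 / (2 * lam)) * (\<integral>y. exp (- f y / \<delta>) * ((norm y)\<^sup>2 * gauss_kernel (lam * \<delta>) p y) \<partial>lborel)
           \<le> (\<delta> * real DIM('a) + b + (norm p)\<^sup>2 / (2 * lam)) * conv_gauss (\<lambda>y. exp (- f y / \<delta>)) (lam * \<delta>) p"
proof -
  define U where "U y = f y + 1 / (2 * lam) * (norm (y - p))\<^sup>2" for y
  have s: "lam * \<delta> > 0" using lam \<delta> by simp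
  have exp_U: "exp (- U y / \<delta>) = exp (- f y / \<delta>) * gauss_kernel (lam * \<delta>) p y" for y
    using lam \<delta> by (simp add: U_def gauss_kernel_def field_simps flip: exp_add)
  have "(U has_derivative (\<lambda>h. (g y + (1 / lam) *\<^sub>R (y - p)) \<bullet> h)) (at y)" for y
    unfolding U_def
    by (rule has_derivative_eq_rhs[OF has_derivative_add[OF deriv has_derivative_mult_right[OF has_derivative_power2_norm_diff]]])
       (simp add: fun_eq_iff inner_add_left)
  moreover note inner_add_shift_ge[OF lam coercive]
  moreover have "integrable lborel (\<lambda>y. exp (- U y / \<delta>))"
    unfolding exp_U by (rule integrable_conv_gauss[OF int s])
  moreover have "integrable lborel (\<lambda>y. exp (- U y / \<delta>) * (norm y)\<^sup>2)"
    unfolding exp_U using integrable_power2_norm_mult_gauss_kernel[OF int s, of p] by (simp add: mult_ac)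
  moreover have "m + 1 / (2 * lam) \<ge> 0"
    using \<open>m \<ge> 0\<close> lam by simp
  ultimately have "(m + 1 / (2 * lam)) * (\<integral>y. exp (- U y / \<delta>) * (norm y)\<^sup>2 \<partial>lborel)
           \<le> (\<delta> * real DIM('a) + (b + (norm p)\<^sup>2 / (2 * lam))) * (\<integral>y. exp (- U y / \<delta>) \<partial>lborel)"
    using \<delta> by (intro second_moment_le_of_coercive_gradient)
  then show ?thesis
    unfolding exp_U conv_gauss_def by (simp add: mult_ac add.assoc)
qed

lemma le_mult_of_ge_pos_root:
  fixes a B C x :: real
  assumes "a > 0" "C \<ge> 0" "x > 0" and x: "x \<ge> (B + sqrt (B\<^sup>2 + 2 * a * C)) / (2 * a)"
  shows "B + C / (2 * x) \<le> a * x"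
proof -
  define S where "S = sqrt (B\<^sup>2 + 2 * a * C)"
  have "S \<ge> 0" "S\<^sup>2 = B\<^sup>2 + 2 * a * C"
    using assms by (simp_all add: S_def)
  moreover have "S \<le> 2 * a * x - B"
    using x[folded S_def] \<open>a > 0\<close> by (simp add: pos_divide_le_eq algebra_simps)
  ultimately have "B\<^sup>2 + 2 * a * C \<le> (2 * a * x - B)\<^sup>2"
    by (metis power_mono)
  then have "2 * a * C \<le> 2 * a * (2 * x * (a * x - B))"
    by (simp add: power2_eq_square algebra_simps)
  then have "C \<le> 2 * x * (a * x - B)"
    using \<open>a > 0\<close> by simp
  then show ?thesis
    using \<open>x > 0\<close> by (simp add: field_simps)
qed

lemma conv_gauss_second_moment_le_on_ball:
  fixes f :: "'a::euclidean_space \<Rightarrow> real" and g :: "'a \<Rightarrow> 'a"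
  assumes lam: "lam > 0" and \<delta>: "\<delta> > 0"
    and deriv: "\<And>y. (f has_derivative (\<lambda>h. g y \<bullet> h)) (at y)"
    and coercive: "\<And>y. g y \<bullet> y \<ge> m * (norm y)\<^sup>2 - b" and "m > 0"
    and int: "integrable lborel (\<lambda>y. exp (- f y / \<delta>))"
    and threshold: "lam \<ge> (\<delta> * real DIM('a) + b + sqrt ((\<delta> * real DIM('a) + b)\<^sup>2 + 2 * \<delta> * m * R\<^sup>2))
                           / (2 * \<delta> * m)"
    and "p \<in> ball 0 R"
  shows "(\<integral>y. exp (- f y / \<delta>) * ((norm y)\<^sup>2 * gauss_kernel (lam * \<delta>) p y) \<partial>lborel)
           \<le> lam * \<delta> * conv_gauss (\<lambda>y. exp (- f y / \<delta>)) (lam * \<delta>) p"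
proof -
  define M Z where "M = (\<integral>y. exp (- f y / \<delta>) * ((norm y)\<^sup>2 * gauss_kernel (lam * \<delta>) p y) \<partial>lborel)"
    and "Z = conv_gauss (\<lambda>y. exp (- f y / \<delta>)) (lam * \<delta>) p"
  have "\<delta> * real DIM('a) + b + R\<^sup>2 / (2 * lam) \<le> \<delta> * m * lam"
    using le_mult_of_ge_pos_root[of "\<delta> * m" "R\<^sup>2" lam "\<delta> * real DIM('a) + b"] threshold lam \<delta> \<open>m > 0\<close>
    by (simp add: mult.assoc)
  moreover have "(norm p)\<^sup>2 / (2 * lam) \<le> R\<^sup>2 / (2 * lam)"
    using \<open>p \<in> ball 0 R\<close> lam by (simp add: divide_right_mono power_mono)
  moreover have "lam * \<delta> * (m + 1 / (2 * lam)) = \<delta> * m * lam + \<delta> / 2"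
    using lam by (simp add: field_simps)
  ultimately have "\<delta> * real DIM('a) + b + (norm p)\<^sup>2 / (2 * lam) \<le> lam * \<delta> * (m + 1 / (2 * lam))"
    using \<delta> by linarith
  moreover have "Z \<ge> 0"
    using conv_gauss_pos[OF int, of "lam * \<delta>" p] lam \<delta> by (simp add: Z_def)
  ultimately have "(\<delta> * real DIM('a) + b + (norm p)\<^sup>2 / (2 * lam)) * Z \<le> (m + 1 / (2 * lam)) * (lam * \<delta> * Z)"
    using mult_right_mono by (fastforce simp: mult_ac)
  with conv_gauss_second_moment_le[OF lam \<delta> deriv coercive _ int, of p] \<open>m > 0\<close>
  have "(m + 1 / (2 * lam)) * M \<le> (m + 1 / (2 * lam)) * (lam * \<delta> * Z)"
    unfolding M_def Z_def by simp
  then show ?thesis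
    unfolding M_def[symmetric] Z_def[symmetric]
    by (rule mult_left_le_imp_le) (use \<open>m > 0\<close> lam in \<open>auto intro: add_pos_pos\<close>)
qed

lemma convex_on_ball_soft_moreau:
  fixes f :: "'a::euclidean_space \<Rightarrow> real" and g :: "'a \<Rightarrow> 'a"
  assumes lam: "lam > 0" and \<delta>: "\<delta> > 0"
    and deriv: "\<And>y. (f has_derivative (\<lambda>h. g y \<bullet> h)) (at y)"
    and coercive: "\<And>y. g y \<bullet> y \<ge> m * (norm y)\<^sup>2 - b" and "m > 0"
    and int: "integrable lborel (\<lambda>y. exp (- f y / \<delta>))"
    and threshold: "lam \<ge> (\<delta> * real DIM('a) + b + sqrt ((\<delta> * real DIM('a) + b)\<^sup>2 + 2 * \<delta> * m * R\<^sup>2))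
                           / (2 * \<delta> * m)"
  shows "convex_on (ball 0 R) (soft_moreau f lam \<delta>)"
proof (rule convex_on_soft_moreau[OF lam \<delta> int convex_ball])
  fix p v :: 'a assume "p \<in> ball 0 R"
  define h where "h = (\<lambda>y. exp (- f y / \<delta>))"
  have s: "lam * \<delta> > 0" using lam \<delta> by simp
  have "(\<integral>y. h y * (((y - p) \<bullet> v - - (p \<bullet> v))\<^sup>2 * gauss_kernel (lam * \<delta>) p y) \<partial>lborel)
      \<le> (\<integral>y. (norm v)\<^sup>2 * (h y * ((norm y)\<^sup>2 * gauss_kernel (lam * \<delta>) p y)) \<partial>lborel)"
  proof (rule integral_mono')
    show "integrable lborel (\<lambda>y. (norm v)\<^sup>2 * (h y * ((norm y)\<^sup>2 * gauss_kernel (lam * \<delta>) p y)))"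
      using integrable_power2_norm_mult_gauss_kernel[OF int s] unfolding h_def by simp
    show "h y * (((y - p) \<bullet> v - - (p \<bullet> v))\<^sup>2 * gauss_kernel (lam * \<delta>) p y)
        \<le> (norm v)\<^sup>2 * (h y * ((norm y)\<^sup>2 * gauss_kernel (lam * \<delta>) p y))" for y
      using power2_inner_le[of y v]
      by (simp add: inner_diff_left h_def mult_left_mono mult_right_mono mult.commute mult.left_commute)
    show "0 \<le> (norm v)\<^sup>2 * (h y * ((norm y)\<^sup>2 * gauss_kernel (lam * \<delta>) p y))" for y
      unfolding h_def by (intro mult_nonneg_nonneg) (simp_all add: less_imp_le)
  qed
  also have "\<dots> \<le> (norm v)\<^sup>2 * (lam * \<delta> * conv_gauss h (lam * \<delta>) p)"
    using conv_gauss_second_moment_le_on_ball[OF lam \<delta> deriv coercive \<open>m > 0\<close> int threshold \<open>p \<in> ball 0 R\<close>]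
    unfolding h_def by (simp add: mult_left_mono)
  finally show "\<exists>c. (\<integral>y. exp (- f y / \<delta>) * (((y - p) \<bullet> v - c)\<^sup>2 * gauss_kernel (lam * \<delta>) p y) \<partial>lborel)
      \<le> lam * \<delta> * (norm v)\<^sup>2 * conv_gauss (\<lambda>y. exp (- f y / \<delta>)) (lam * \<delta>) p"
    unfolding h_def by (intro exI[of _ "- (p \<bullet> v)"]) (simp add: mult_ac)
qed

lemma gauss_kernel_mult:
  fixes p y :: "'a::real_inner"
  assumes "\<sigma> > 0" "s > 0"
  shows "gauss_kernel \<sigma> 0 y * gauss_kernel s p y
           = gauss_kernel (\<sigma> * s / (\<sigma> + s)) ((\<sigma> / (\<sigma> + s)) *\<^sub>R p) y * gauss_kernel (\<sigma> + s) p 0"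
proof -
  have sq: "(norm (y - p))\<^sup>2 = (norm y)\<^sup>2 - 2 * (y \<bullet> p) + (norm p)\<^sup>2"
    "(norm (y - (\<sigma> / (\<sigma> + s)) *\<^sub>R p))\<^sup>2 = (norm y)\<^sup>2 - 2 * (\<sigma> / (\<sigma> + s)) * (y \<bullet> p) + (\<sigma> / (\<sigma> + s))\<^sup>2 * (norm p)\<^sup>2"
    unfolding power2_norm_eq_inner
    by (simp_all add: inner_diff_left inner_diff_right inner_commute power2_eq_square)
  show ?thesis
    using assms unfolding gauss_kernel_def mult_exp_exp sq
    by (simp add: divide_simps power2_eq_square add_pos_pos) (simp add: algebra_simps)
qed

lemma conv_gauss_gauss_kernel:
  fixes q :: "'a::euclidean_space"
  assumes "\<sigma> > 0" "s > 0"
  shows "conv_gauss (gauss_kernel \<sigma> 0) s q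
           = (\<integral>y. gauss_kernel (\<sigma> * s / (\<sigma> + s)) 0 (y::'a) \<partial>lborel) * gauss_kernel (\<sigma> + s) q 0"
proof -
  define \<mu> where "\<mu> = (\<sigma> / (\<sigma> + s)) *\<^sub>R q"
  have "(\<integral>y. gauss_kernel (\<sigma> * s / (\<sigma> + s)) \<mu> y \<partial>lborel)
      = (\<integral>y. gauss_kernel (\<sigma> * s / (\<sigma> + s)) \<mu> (\<mu> + 1 *\<^sub>R y) \<partial>lborel)"
    using lborel_integral_euclidean_affine[of "gauss_kernel (\<sigma> * s / (\<sigma> + s)) \<mu>" 1 \<mu>] by simp
  also have "\<dots> = (\<integral>y. gauss_kernel (\<sigma> * s / (\<sigma> + s)) 0 (y::'a) \<partial>lborel)"
    by (simp add: gauss_kernel_def)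
  finally show ?thesis
    unfolding conv_gauss_def gauss_kernel_mult[OF assms] \<mu>_def[symmetric] by simp
qed

lemma conv_gauss_gaussian_centered_moment:
  fixes p v :: "'a::euclidean_space"
  assumes \<sigma>: "\<sigma> > 0" and s: "s > 0" and int: "integrable lborel (gauss_kernel \<sigma> (0::'a))"
  shows "(\<integral>y. gauss_kernel \<sigma> 0 y * (((y - p) \<bullet> v + s / (\<sigma> + s) * (p \<bullet> v))\<^sup>2 * gauss_kernel s p y) \<partial>lborel)
           = \<sigma> * s / (\<sigma> + s) * (norm v)\<^sup>2 * conv_gauss (gauss_kernel \<sigma> 0) s p"
proof -
  define C where "C = (\<integral>y. gauss_kernel (\<sigma> * s / (\<sigma> + s)) 0 (y::'a) \<partial>lborel)"
  define Z where "Z q = conv_gauss (gauss_kernel \<sigma> 0) s q" for q :: 'a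
  have Z: "Z q = C * gauss_kernel (\<sigma> + s) q 0" for q
    unfolding Z_def C_def using \<sigma> s by (rule conv_gauss_gauss_kernel)
  have "\<sigma> + s \<noteq> 0" using \<sigma> s by simp
  (* The derivatives of Z are computed twice: under the integral and from the closed form. *)
  have Z': "conv_gauss_deriv (gauss_kernel \<sigma> 0) s q v = C * ((0 - q) \<bullet> v / (\<sigma> + s) * gauss_kernel (\<sigma> + s) q 0)" for q
  proof (rule DERIV_unique)
    show "((\<lambda>t. Z (q + t *\<^sub>R v)) has_real_derivative conv_gauss_deriv (gauss_kernel \<sigma> 0) s q v) (at 0)"
      using conv_gauss_line_deriv[OF int s, of q v 0] by (simp add: Z_def)
    show "((\<lambda>t. Z (q + t *\<^sub>R v)) has_real_derivative C * ((0 - q) \<bullet> v / (\<sigma> + s) * gauss_kernel (\<sigma> + s) q 0)) (at 0)"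
      unfolding Z using DERIV_cmult[OF gauss_kernel_line_deriv[OF \<open>\<sigma> + s \<noteq> 0\<close>, of q v 0 0]] by simp
  qed
  have Z'': "conv_gauss_deriv2 (gauss_kernel \<sigma> 0) s p v
      = C * ((((0 - p) \<bullet> v)\<^sup>2 / (\<sigma> + s)\<^sup>2 - (norm v)\<^sup>2 / (\<sigma> + s)) * gauss_kernel (\<sigma> + s) p 0)"
  proof (rule DERIV_unique)
    show "((\<lambda>t. conv_gauss_deriv (gauss_kernel \<sigma> 0) s (p + t *\<^sub>R v) v) has_real_derivative
            conv_gauss_deriv2 (gauss_kernel \<sigma> 0) s p v) (at 0)"
      using conv_gauss_deriv_line_deriv[OF int s, of p v 0] by simp
    show "((\<lambda>t. conv_gauss_deriv (gauss_kernel \<sigma> 0) s (p + t *\<^sub>R v) v) has_real_derivative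
            C * ((((0 - p) \<bullet> v)\<^sup>2 / (\<sigma> + s)\<^sup>2 - (norm v)\<^sup>2 / (\<sigma> + s)) * gauss_kernel (\<sigma> + s) p 0)) (at 0)"
      unfolding Z' using DERIV_cmult[OF gauss_kernel_line_deriv2[OF \<open>\<sigma> + s \<noteq> 0\<close>, of 0 p v 0]] by simp
  qed
  have "(\<integral>y. gauss_kernel \<sigma> 0 y * (((y - p) \<bullet> v - - (s / (\<sigma> + s) * (p \<bullet> v)))\<^sup>2 * gauss_kernel s p y) \<partial>lborel)
      = \<sigma> * s / (\<sigma> + s) * (norm v)\<^sup>2 * (C * gauss_kernel (\<sigma> + s) p 0)"
    unfolding conv_gauss_centered_moment[OF int s] Z'' Z'[of p] Z_def[symmetric] Z
    using \<sigma> s by (simp add: field_simps power2_eq_square)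
  then show ?thesis
    by (simp add: Z_def[symmetric] Z)
qed

lemma conv_gauss_centered_moment_le_of_gaussian_bounds:
  fixes h :: "'a::euclidean_space \<Rightarrow> real"
  assumes \<sigma>: "\<sigma> > 0" and s: "s > 0" and int: "integrable lborel h" and "A > 0"
    and lower: "\<And>y. A * gauss_kernel \<sigma> 0 y \<le> h y" and upper: "\<And>y. h y \<le> B * gauss_kernel \<sigma> 0 y"
    and ratio: "B * \<sigma> \<le> A * (\<sigma> + s)"
  shows "(\<integral>y. h y * (((y - p) \<bullet> v + s / (\<sigma> + s) * (p \<bullet> v))\<^sup>2 * gauss_kernel s p y) \<partial>lborel)
           \<le> s * (norm v)\<^sup>2 * conv_gauss h s p"
proof -
  define K where "K = gauss_kernel \<sigma> (0::'a)"
  define W where "W y = ((y - p) \<bullet> v + s / (\<sigma> + s) * (p \<bullet> v))\<^sup>2 * gauss_kernel s p y" for y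
  have "A \<le> B"
    using lower[of 0] upper[of 0] by (simp add: gauss_kernel_def)
  have int_K: "integrable lborel K"
  proof (rule Bochner_Integration.integrable_bound[where f = "\<lambda>y. h y / A"])
    show "AE y in lborel. norm (K y) \<le> norm (h y / A)"
    proof (rule AE_I2)
      fix y
      have "A * K y \<le> h y" "0 < A * K y"
        using lower \<open>A > 0\<close> by (simp_all add: K_def)
      then show "norm (K y) \<le> norm (h y / A)"
        using \<open>A > 0\<close> by (simp add: K_def abs_of_pos pos_le_divide_eq mult.commute)
    qed
  qed (use int in \<open>auto simp: K_def\<close>)
  have "(\<integral>y. h y * W y \<partial>lborel) \<le> (\<integral>y. B * (K y * W y) \<partial>lborel)"
  proof (rule integral_mono')
    show "integrable lborel (\<lambda>y. B * (K y * W y))"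
      using integrable_centered_moment[OF int_K s, of p v "- (s / (\<sigma> + s) * (p \<bullet> v))"] by (simp add: W_def)
    show "h y * W y \<le> B * (K y * W y)" for y
    proof -
      have "0 \<le> W y" by (simp add: W_def)
      then show ?thesis using mult_right_mono[OF upper[of y]] by (simp add: K_def mult.assoc)
    qed
    show "0 \<le> B * (K y * W y)" for y
      using \<open>A > 0\<close> \<open>A \<le> B\<close> by (simp add: K_def W_def less_imp_le)
  qed
  also have "\<dots> = B * (\<sigma> * s / (\<sigma> + s) * (norm v)\<^sup>2 * conv_gauss K s p)"
    using conv_gauss_gaussian_centered_moment[OF \<sigma> s int_K[unfolded K_def], of p v]
    by (simp add: K_def W_def)
  also have "\<dots> = B * (\<sigma> / (\<sigma> + s)) * (s * (norm v)\<^sup>2 * conv_gauss K s p)"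
    by simp
  also have "\<dots> \<le> A * (s * (norm v)\<^sup>2 * conv_gauss K s p)"
  proof (rule mult_right_mono)
    show "B * (\<sigma> / (\<sigma> + s)) \<le> A"
      using ratio \<sigma> s by (simp add: divide_simps add_pos_pos)
    show "0 \<le> s * (norm v)\<^sup>2 * conv_gauss K s p"
      using conv_gauss_pos[OF int_K s] s by (simp add: K_def less_imp_le)
  qed
  also have "\<dots> \<le> s * (norm v)\<^sup>2 * conv_gauss h s p"
  proof -
    have "A * conv_gauss K s p = conv_gauss (\<lambda>y. A * K y) s p"
      unfolding conv_gauss_def by (simp add: mult.assoc)
    also have "\<dots> \<le> conv_gauss h s p"
      using int_K int s lower by (intro conv_gauss_mono) (simp_all add: K_def)
    finally have "A * conv_gauss K s p \<le> conv_gauss h s p" .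
    from mult_left_mono[OF this, of "s * (norm v)\<^sup>2"] show ?thesis
      using s by (simp add: mult_ac)
  qed
  finally show ?thesis
    unfolding W_def .
qed

lemma convex_on_soft_moreau_quadratic_plus_bounded:
  fixes f V :: "'a::euclidean_space \<Rightarrow> real"
  assumes lam: "lam > 0" and \<delta>: "\<delta> > 0" and \<kappa>: "\<kappa> > 0"
    and f: "\<And>y. f y = \<kappa> / 2 * (norm y)\<^sup>2 + V y"
    and V_lower: "\<And>y. V_min \<le> V y" and V_upper: "\<And>y. V y \<le> V_max"
    and int: "integrable lborel (\<lambda>y. exp (- f y / \<delta>))"
    and threshold: "lam \<ge> (exp ((V_max - V_min) / \<delta>) - 1) / \<kappa>"
  shows "convex_on UNIV (soft_moreau f lam \<delta>)"
proof (rule convex_on_soft_moreau[OF lam \<delta> int convex_UNIV])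
  fix p v :: 'a
  have h: "exp (- f y / \<delta>) = exp (- V y / \<delta>) * gauss_kernel (\<delta> / \<kappa>) 0 y" for y
    using \<delta> \<kappa> by (simp add: f gauss_kernel_def field_simps flip: exp_add)
  have "(\<integral>y. exp (- f y / \<delta>) * (((y - p) \<bullet> v + lam * \<delta> / (\<delta> / \<kappa> + lam * \<delta>) * (p \<bullet> v))\<^sup>2
          * gauss_kernel (lam * \<delta>) p y) \<partial>lborel)
        \<le> lam * \<delta> * (norm v)\<^sup>2 * conv_gauss (\<lambda>y. exp (- f y / \<delta>)) (lam * \<delta>) p"
  proof (rule conv_gauss_centered_moment_le_of_gaussian_bounds[OF _ _ int])
    show "exp (- V_max / \<delta>) * gauss_kernel (\<delta> / \<kappa>) 0 y \<le> exp (- f y / \<delta>)" for y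
      unfolding h using V_upper[of y] \<delta> by (intro mult_right_mono) (simp_all add: divide_right_mono less_imp_le)
    show "exp (- f y / \<delta>) \<le> exp (- V_min / \<delta>) * gauss_kernel (\<delta> / \<kappa>) 0 y" for y
      unfolding h using V_lower[of y] \<delta> by (intro mult_right_mono) (simp_all add: divide_right_mono less_imp_le)
    have "exp ((V_max - V_min) / \<delta>) \<le> 1 + lam * \<kappa>"
      using threshold \<kappa> by (simp add: divide_le_eq algebra_simps)
    then have "exp ((V_max - V_min) / \<delta>) * (exp (- V_max / \<delta>) * (\<delta> / \<kappa>))
        \<le> (1 + lam * \<kappa>) * (exp (- V_max / \<delta>) * (\<delta> / \<kappa>))"
      using \<delta> \<kappa> by (intro mult_right_mono) simp_all
    moreover have "exp ((V_max - V_min) / \<delta>) * exp (- V_max / \<delta>) = exp (- V_min / \<delta>)"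
      by (simp add: diff_divide_distrib flip: exp_add)
    ultimately show "exp (- V_min / \<delta>) * (\<delta> / \<kappa>) \<le> exp (- V_max / \<delta>) * (\<delta> / \<kappa> + lam * \<delta>)"
      using \<kappa> by (simp add: field_simps)
  qed (use lam \<delta> \<kappa> in simp_all)
  then show "\<exists>c. (\<integral>y. exp (- f y / \<delta>) * (((y - p) \<bullet> v - c)\<^sup>2 * gauss_kernel (lam * \<delta>) p y) \<partial>lborel)
      \<le> lam * \<delta> * (norm v)\<^sup>2 * conv_gauss (\<lambda>y. exp (- f y / \<delta>)) (lam * \<delta>) p"
    by (intro exI[of _ "- (lam * \<delta> / (\<delta> / \<kappa> + lam * \<delta>) * (p \<bullet> v))"]) simp
qed

theorem theorem4:
  fixes f :: "'a::euclidean_space \<Rightarrow> real" and lam \<delta> :: real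
  assumes lam_pos: "lam > 0" and delta_pos: "\<delta> > 0"
    and A1_cont: "continuous_on UNIV f"
    and A1_min: "\<exists>x0. \<forall>y. f x0 \<le> f y"
    and A2: "(\<integral>\<^sup>+ y. ennreal (exp (- f y / \<delta>)) \<partial>lborel) < \<infinity>"
  shows "(\<forall>g m b R.
            (\<forall>y. (f has_derivative (\<lambda>h. g y \<bullet> h)) (at y)) \<and> continuous_on UNIV g \<and>
            m > 0 \<and> b \<ge> 0 \<and> (\<forall>y. g y \<bullet> y \<ge> m * (norm y)\<^sup>2 - b) \<and> R > 0 \<and>
            lam \<ge> (\<delta> * real DIM('a) + b + sqrt ((\<delta> * real DIM('a) + b)\<^sup>2 + 2 * \<delta> * m * R\<^sup>2))
                    / (2 * \<delta> * m)
          \<longrightarrow> convex_on (ball 0 R) (soft_moreau f lam \<delta>))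
       \<and> (\<forall>\<kappa> V.
            \<kappa> > 0 \<and> (\<forall>y. f y = \<kappa> / 2 * (norm y)\<^sup>2 + V y) \<and> bounded (range V) \<and>
            lam \<ge> (exp ((Sup (range V) - Inf (range V)) / \<delta>) - 1) / \<kappa>
          \<longrightarrow> convex_on UNIV (soft_moreau f lam \<delta>))"
proof -
  have [measurable]: "f \<in> borel_measurable borel"
    by (rule borel_measurable_continuous_onI[OF A1_cont])
  have int: "integrable lborel (\<lambda>y. exp (- f y / \<delta>))"
    using A2 by (intro integrableI_bounded) simp_all
  show ?thesis
  proof (intro conjI allI impI; elim conjE)
    show "convex_on (ball 0 R) (soft_moreau f lam \<delta>)"
      if "\<forall>y. (f has_derivative (\<lambda>h. g y \<bullet> h)) (at y)" "m > 0" "\<forall>y. g y \<bullet> y \<ge> m * (norm y)\<^sup>2 - b"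
        "lam \<ge> (\<delta> * real DIM('a) + b + sqrt ((\<delta> * real DIM('a) + b)\<^sup>2 + 2 * \<delta> * m * R\<^sup>2)) / (2 * \<delta> * m)"
      for g :: "'a \<Rightarrow> 'a" and m b R
      using that by (intro convex_on_ball_soft_moreau[OF lam_pos delta_pos _ _ _ int]) auto
    show "convex_on UNIV (soft_moreau f lam \<delta>)"
      if "\<kappa> > 0" "\<forall>y. f y = \<kappa> / 2 * (norm y)\<^sup>2 + V y" "bounded (range V)"
        "lam \<ge> (exp ((Sup (range V) - Inf (range V)) / \<delta>) - 1) / \<kappa>"
      for \<kappa> and V :: "'a \<Rightarrow> real"
      using that bounded_imp_bdd_below[OF that(3)] bounded_imp_bdd_above[OF that(3)]
      by (intro convex_on_soft_moreau_quadratic_plus_bounded[OF lam_pos delta_pos _ _ _ _ int])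
         (auto intro: cInf_lower cSup_upper)
  qed
qed

end
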